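(* Let $\phi$ have the HTHS prior or the HTHS+ prior (defined in the context), and let $y\mid\phi\sim\mathcal{N}(\phi,1)$. Let $m(y)=\int \mathcal{N}(y\mid\phi,1)\,f(\phi)\,\mathrm{d}\phi$ be the marginal density of $y$, where $f$ is the prior density of $\phi$. Then there is a slowly varying function $L$ (i.e. $L(tx)/L(x)\to 1$ as $x\to\infty$ for every $t>0$) such that $$m(y)\asymp \frac{L(y^2)}{|y|}\quad\text{as } |y|\to\infty .$$ Consequently, $\frac{\mathrm{d}}{\mathrm{d}y}\log m(y)\asymp \frac{1}{|y|}$ as $|y|\to\infty$, up to the (more quickly vanishing) score $\frac{\mathrm{d}}{\mathrm{d}y}\log L(y^2)$ of the slowly varying function.
   Context: The HTHS prior on $\phi\in\mathbb{R}$: $\phi\mid\gamma\sim\mathcal{N}(0,1/\gamma)$, where $\gamma>0$ has the log-Cauchy density $\pi(\gamma)=\frac{1}{\gamma\left((\log\gamma)^2+\pi^2\right)}$, $\gamma\in(0,\infty)$. (Equivalently, $\gamma\mid p,\omega\sim\mathrm{Gamma}(p,\omega)$ with rate $\omega$, $\omega\mid p\sim\mathrm{Gamma}(1-p,1)$, $p\sim\mathrm{Uniform}(0,1)$.) The HTHS+ prior on $\phi$: $\phi\mid\gamma\sim\mathcal{N}(0,1/\gamma)$ where $\gamma$ has density $\pi(\gamma)=\frac{2}{\gamma\left((\log\gamma)^2+4\pi^2\right)}$, $\gamma\in(0,\infty)$. The notation $g(y)\asymp h(y)$ means asymptotic equivalence as $|y|\to\infty$. *)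

theory Defs
  imports "HOL-Probability.Probability" "HOL-Library.Landau_Symbols"
begin

text \<open>Log-Cauchy density of the precision gamma for the HTHS prior.\<close>
definition hths_gamma_density :: "real \<Rightarrow> real" where
  "hths_gamma_density g = 1 / (g * ((ln g)\<^sup>2 + pi\<^sup>2))"

definition hths_plus_gamma_density :: "real \<Rightarrow> real" where
  "hths_plus_gamma_density g = 2 / (g * ((ln g)\<^sup>2 + 4 * pi\<^sup>2))"

text \<open>Prior density of phi: scale mixture of N(0, 1/gamma) over the density p of gamma on (0,oo).
  normal_density mu sigma uses the standard deviation sigma.\<close>
definition scale_mixture_prior :: "(real \<Rightarrow> real) \<Rightarrow> real \<Rightarrow> real" where
  "scale_mixture_prior p phi =
     (LINT g:{0<..}|lborel. normal_density 0 (1 / sqrt g) phi * p g)"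

definition marginal_density :: "(real \<Rightarrow> real) \<Rightarrow> real \<Rightarrow> real" where
  "marginal_density f y = (LINT phi|lborel. normal_density phi 1 y * f phi)"

definition slowly_varying :: "(real \<Rightarrow> real) \<Rightarrow> bool" where
  "slowly_varying L \<longleftrightarrow> (\<forall>\<^sub>F x in at_top. L x > 0) \<and>
     (\<forall>t>0. ((\<lambda>x. L (t * x) / L x) \<longlongrightarrow> 1) at_top)"

end

theory Submission
  imports Defs "HOL-Real_Asymp.Real_Asymp"
begin

(*
  Both priors have precision density p(g) = c / (g ((ln g)^2 + b^2)). Integrating phi out gives
  y | g ~ N(0, 1 + 1/g), so with u = g / (1 + g) and a = y^2 / 2 the marginal density satisfies
  sqrt (2 pi) m(y) = D(a) = int sqrt u exp(-a u) p(g) dg, while -sqrt (2 pi) y m'(y) = E(a) is the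
  same integral with the extra factor 2 a u. Integrating by parts against psi(g) = g (1 + g) p(g)
  shows D(a) - E(a) = o(D(a)): the boundary and tail terms are exponentially small in a,
  psi' = o(p) as g -> 0, and D(a) decays only like 1 / (sqrt a (ln a)^2). Hence the elasticity
  y m'(y) / m(y) tends to -1, so L(x) = sqrt x m(sqrt x) has elasticity tending to 0, which makes it
  slowly varying, and m(y) = L(y^2) / |y|.
*)

section \<open>Integrals depending on a parameter\<close>

lemma difference_quotient_bound:
  fixes g g' :: "real \<Rightarrow> real"
  assumes "\<And>x. (g has_real_derivative g' x) (at x)" and "\<And>x. \<bar>g' x\<bar> \<le> B"
  shows "\<bar>(g (x + h) - g x) / h\<bar> \<le> B"
proof (cases "h = 0")
  case False
  have "\<bar>g (x + h) - g x\<bar> \<le> B * \<bar>x + h - x\<bar>"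
    using field_differentiable_bound[where S=UNIV and f=g and f'=g' and x="x + h" and y=x] assms
    by (auto intro: has_field_derivative_at_within)
  with False show ?thesis
    by (simp add: abs_divide divide_le_eq)
qed (use assms(2)[of x] in auto)

lemma tendsto_set_integral_difference_quotient:
  fixes f f' :: "real \<Rightarrow> 'a \<Rightarrow> real" and w :: "'a \<Rightarrow> real"
  assumes int: "\<And>x. set_integrable M S (f x)"
    and der: "\<And>x t. t \<in> S \<Longrightarrow> ((\<lambda>x. f x t) has_real_derivative f' x t) (at x)"
    and meas: "\<And>x. set_borel_measurable M S (f' x)"
    and w: "set_integrable M S w"
    and bound: "\<And>x t. t \<in> S \<Longrightarrow> \<bar>f' x t\<bar> \<le> w t"
  shows "((\<lambda>h. LINT t:S|M. (f (x + h) t - f x t) / h) \<longlongrightarrow> (LINT t:S|M. f' x t)) (at 0)"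
  unfolding tendsto_at_iff_sequentially comp_def set_lebesgue_integral_def
proof (intro allI impI)
  fix X :: "nat \<Rightarrow> real"
  assume "\<forall>i. X i \<in> UNIV - {0}" "X \<longlonglongrightarrow> 0"
  then have X: "filterlim X (at 0) sequentially"
    by (intro filterlim_atI) auto
  let ?q = "\<lambda>h t. indicator S t *\<^sub>R ((f (x + h) t - f x t) / h)"
  show "(\<lambda>i. integral\<^sup>L M (?q (X i))) \<longlonglongrightarrow> integral\<^sup>L M (\<lambda>t. indicator S t *\<^sub>R f' x t)"
  proof (rule integral_dominated_convergence[where w = "\<lambda>t. indicator S t * w t"])
    show "?q (X i) \<in> borel_measurable M" for i
    proof -
      have "(\<lambda>t. indicator S t * f (x + X i) t) \<in> borel_measurable M"
        "(\<lambda>t. indicator S t * f x t) \<in> borel_measurable M"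
        using int by (auto simp: set_integrable_def dest: borel_measurable_integrable)
      then have "(\<lambda>t. (indicator S t * f (x + X i) t - indicator S t * f x t) / X i) \<in> borel_measurable M"
        by measurable
      then show ?thesis
        by (simp add: times_divide_eq_right right_diff_distrib)
    qed
    show "(\<lambda>t. indicator S t *\<^sub>R f' x t) \<in> borel_measurable M"
      using meas[of x] by (simp add: set_borel_measurable_def)
    show "integrable M (\<lambda>t. indicator S t * w t)"
      using w by (simp add: set_integrable_def)
    show "AE t in M. (\<lambda>i. ?q (X i) t) \<longlonglongrightarrow> indicator S t *\<^sub>R f' x t"
    proof (intro AE_I2)
      fix t
      show "(\<lambda>i. ?q (X i) t) \<longlonglongrightarrow> indicator S t *\<^sub>R f' x t"
      proof (cases "t \<in> S")
        case True
        have "((\<lambda>h. (f (x + h) t - f x t) / h) \<longlongrightarrow> f' x t) (at 0)"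
          using der[OF True] by (simp add: DERIV_def)
        from filterlim_compose[OF this X] True show ?thesis
          by simp
      qed simp
    qed
    show "AE t in M. norm (?q (X i) t) \<le> indicator S t * w t" for i
      using difference_quotient_bound[OF der bound] by (intro AE_I2) (simp add: indicator_def)
  qed
qed

lemma has_real_derivative_set_integral:
  fixes f f' :: "real \<Rightarrow> 'a \<Rightarrow> real" and w :: "'a \<Rightarrow> real"
  assumes int: "\<And>x. set_integrable M S (f x)"
    and "\<And>x t. t \<in> S \<Longrightarrow> ((\<lambda>x. f x t) has_real_derivative f' x t) (at x)"
    and "\<And>x. set_borel_measurable M S (f' x)"
    and "set_integrable M S w"
    and "\<And>x t. t \<in> S \<Longrightarrow> \<bar>f' x t\<bar> \<le> w t"
  shows "((\<lambda>x. LINT t:S|M. f x t) has_real_derivative (LINT t:S|M. f' x t)) (at x)"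
proof -
  have quotient: "((LINT t:S|M. f (x + h) t) - (LINT t:S|M. f x t)) / h
      = (LINT t:S|M. (f (x + h) t - f x t) / h)" for h
    using int by (simp add: set_integral_diff set_integral_divide_zero)
  show ?thesis
    unfolding DERIV_def quotient by (rule tendsto_set_integral_difference_quotient[OF assms])
qed

lemma set_integrable_bounded_mult:
  fixes f h :: "'a \<Rightarrow> real"
  assumes f: "set_integrable M S f" and h: "h \<in> borel_measurable M"
    and bound: "\<And>x. x \<in> S \<Longrightarrow> \<bar>h x\<bar> \<le> B"
  shows "set_integrable M S (\<lambda>x. h x * f x)"
proof (rule set_integrable_bound[OF set_integrable_mult_right[of "\<bar>B\<bar>", OF f]])
  have "(\<lambda>x. indicator S x * f x) \<in> borel_measurable M"
    using f by (auto simp: set_integrable_def dest: borel_measurable_integrable)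
  from borel_measurable_times[OF h this]
  show "set_borel_measurable M S (\<lambda>x. h x * f x)"
    by (simp add: set_borel_measurable_def mult_ac)
  show "AE x in M. x \<in> S \<longrightarrow> norm (h x * f x) \<le> norm (\<bar>B\<bar> * f x)"
  proof (intro AE_I2 impI)
    fix x assume "x \<in> S"
    then have "\<bar>h x\<bar> \<le> \<bar>B\<bar>"
      using bound[of x] by linarith
    then show "norm (h x * f x) \<le> norm (\<bar>B\<bar> * f x)"
      by (simp add: abs_mult mult_right_mono)
  qed
qed

lemma set_integral_mono_set:
  fixes f :: "'a \<Rightarrow> real"
  assumes "set_integrable M A f" "B \<subseteq> A" "B \<in> sets M" "\<And>x. x \<in> A \<Longrightarrow> 0 \<le> f x"
  shows "(LINT x:B|M. f x) \<le> (LINT x:A|M. f x)"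
  using set_integrable_subset[OF assms(1,3,2)] assms(1) assms(2,4)
  unfolding set_integrable_def set_lebesgue_integral_def
  by (intro integral_mono) (auto simp: indicator_def)

section \<open>Slowly varying functions\<close>

lemma shifted_difference_tendsto_zero:
  fixes g g' :: "real \<Rightarrow> real"
  assumes der: "\<forall>\<^sub>F s in at_top. (g has_real_derivative g' s) (at s)"
    and lim: "(g' \<longlongrightarrow> 0) at_top"
  shows "((\<lambda>s. g (s + \<tau>) - g s) \<longlongrightarrow> 0) at_top"
proof (rule tendstoI)
  fix \<epsilon> :: real assume "\<epsilon> > 0"
  define B where "B = \<epsilon> / (\<bar>\<tau>\<bar> + 1)"
  have "B > 0" using \<open>\<epsilon> > 0\<close> by (simp add: B_def)
  have "\<forall>\<^sub>F s in at_top. (g has_real_derivative g' s) (at s) \<and> \<bar>g' s\<bar> < B"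
    using der tendstoD[OF lim \<open>B > 0\<close>] by eventually_elim (simp add: dist_real_def)
  then obtain S where S: "\<And>s. s \<ge> S \<Longrightarrow> (g has_real_derivative g' s) (at s) \<and> \<bar>g' s\<bar> < B"
    by (auto simp: eventually_at_top_linorder)
  show "\<forall>\<^sub>F s in at_top. dist (g (s + \<tau>) - g s) 0 < \<epsilon>"
    using eventually_ge_at_top[of "S + \<bar>\<tau>\<bar>"]
  proof eventually_elim
    case (elim s)
    have "norm (g (s + \<tau>) - g s) \<le> B * norm (s + \<tau> - s)"
    proof (rule field_differentiable_bound[where S="{S..}" and f'=g'])
      show "(g has_field_derivative g' z) (at z within {S..})" if "z \<in> {S..}" for z
        using S[of z] that by (auto intro: has_field_derivative_at_within)
      show "norm (g' z) \<le> B" if "z \<in> {S..}" for z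
        using S[of z] that by auto
      show "s + \<tau> \<in> {S..}" "s \<in> {S..}"
        using elim by auto
    qed simp
    also have "\<dots> < \<epsilon>"
      using \<open>\<epsilon> > 0\<close> by (simp add: B_def field_simps)
    finally show ?case by (simp add: dist_real_def)
  qed
qed

lemma slowly_varying_if_elasticity_tendsto_zero:
  fixes f f' :: "real \<Rightarrow> real"
  assumes der: "\<forall>\<^sub>F x in at_top. 0 < f x \<and> (f has_real_derivative f' x) (at x)"
    and lim: "((\<lambda>x. x * f' x / f x) \<longlongrightarrow> 0) at_top"
  shows "slowly_varying f"
  unfolding slowly_varying_def
proof (intro conjI allI impI)
  show "\<forall>\<^sub>F x in at_top. 0 < f x"
    using der by eventually_elim simp
  fix t :: real assume "t > 0"
  define g where "g = (\<lambda>s. ln (f (exp s)))"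
  have "\<forall>\<^sub>F s in at_top. (g has_real_derivative exp s * f' (exp s) / f (exp s)) (at s)"
    using eventually_compose_filterlim[OF der exp_at_top]
  proof eventually_elim
    case (elim s)
    have "((\<lambda>s. f (exp s)) has_real_derivative f' (exp s) * exp s) (at s)"
      using elim DERIV_chain2[OF _ DERIV_exp] by blast
    from DERIV_chain2[OF DERIV_ln_divide[OF conjunct1[OF elim]] this]
    show ?case by (simp add: g_def field_simps)
  qed
  moreover have "((\<lambda>s. exp s * f' (exp s) / f (exp s)) \<longlongrightarrow> 0) at_top"
    using filterlim_compose[OF lim exp_at_top] by simp
  ultimately have "((\<lambda>s. g (s + ln t) - g s) \<longlongrightarrow> 0) at_top"
    by (rule shifted_difference_tendsto_zero)
  from tendsto_exp[OF filterlim_compose[OF this ln_at_top]]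
  have "((\<lambda>x. exp (g (ln x + ln t) - g (ln x))) \<longlongrightarrow> 1) at_top"
    by simp
  moreover have "\<forall>\<^sub>F x in at_top. exp (g (ln x + ln t) - g (ln x)) = f (t * x) / f x"
  proof -
    have "filterlim (\<lambda>x. t * x) at_top at_top"
      using \<open>t > 0\<close> by (intro filterlim_tendsto_pos_mult_at_top[OF tendsto_const] filterlim_ident)
    from eventually_compose_filterlim[OF der this]
    show ?thesis
      using eventually_gt_at_top[of 0] der
    proof eventually_elim
      case (elim x)
      then show ?case
        using \<open>t > 0\<close> by (simp add: g_def exp_add exp_diff mult.commute)
    qed
  qed
  ultimately show "((\<lambda>x. f (t * x) / f x) \<longlongrightarrow> 1) at_top"
    by (rule Lim_transform_eventually)
qed

definition sqrt_scaled :: "(real \<Rightarrow> real) \<Rightarrow> real \<Rightarrow> real" where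
  "sqrt_scaled m x = sqrt x * m (sqrt x)"

lemma sqrt_scaled_sq:
  assumes "\<And>y. m (- y) = m y"
  shows "sqrt_scaled m (y\<^sup>2) = \<bar>y\<bar> * m y"
  using assms[of y] by (cases "0 \<le> y") (simp_all add: sqrt_scaled_def)

lemma has_real_derivative_sqrt_scaled:
  assumes "0 < x" and "(m has_real_derivative m' (sqrt x)) (at (sqrt x))"
  shows "(sqrt_scaled m has_real_derivative (m (sqrt x) + sqrt x * m' (sqrt x)) / (2 * sqrt x)) (at x)"
proof -
  have "(sqrt_scaled m has_real_derivative
      inverse (sqrt x) / 2 * m (sqrt x) + m' (sqrt x) * (inverse (sqrt x) / 2) * sqrt x) (at x)"
    unfolding sqrt_scaled_def[abs_def]
    using DERIV_mult[OF DERIV_real_sqrt DERIV_chain2[OF assms(2) DERIV_real_sqrt]] assms(1) by blast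
  then show ?thesis
    using assms(1) by (simp add: field_simps)
qed

lemma slowly_varying_sqrt_scaled:
  fixes m m' :: "real \<Rightarrow> real"
  assumes pos: "\<forall>\<^sub>F s in at_top. 0 < m s"
    and der: "\<And>s. (m has_real_derivative m' s) (at s)"
    and elasticity: "((\<lambda>s. s * m' s / m s) \<longlongrightarrow> -1) at_top"
  shows "slowly_varying (sqrt_scaled m)"
proof (rule slowly_varying_if_elasticity_tendsto_zero)
  define L' where "L' x = (m (sqrt x) + sqrt x * m' (sqrt x)) / (2 * sqrt x)" for x
  have pos_sqrt: "\<forall>\<^sub>F x in at_top. 0 < x \<and> 0 < m (sqrt x)"
    using eventually_compose_filterlim[OF pos sqrt_at_top] eventually_gt_at_top[of 0] by eventually_elim simp
  then show "\<forall>\<^sub>F x in at_top. 0 < sqrt_scaled m x \<and> (sqrt_scaled m has_real_derivative L' x) (at x)"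
    by eventually_elim (simp add: sqrt_scaled_def L'_def has_real_derivative_sqrt_scaled der)
  have "\<forall>\<^sub>F x in at_top. (1 + sqrt x * m' (sqrt x) / m (sqrt x)) / 2 = x * L' x / sqrt_scaled m x"
    using pos_sqrt
  proof eventually_elim
    case (elim x)
    then have "0 < sqrt x" "0 < m (sqrt x)"
      by auto
    then have "(sqrt x)\<^sup>2 * ((m (sqrt x) + sqrt x * m' (sqrt x)) / (2 * sqrt x)) / (sqrt x * m (sqrt x))
        = (1 + sqrt x * m' (sqrt x) / m (sqrt x)) / 2"
      by (simp only: field_simps power2_eq_square) simp
    with elim show ?case
      by (simp add: sqrt_scaled_def L'_def)
  qed
  moreover have "((\<lambda>x. (1 + sqrt x * m' (sqrt x) / m (sqrt x)) / 2) \<longlongrightarrow> (1 + -1) / 2) at_top"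
    by (intro tendsto_intros filterlim_compose[OF elasticity sqrt_at_top]) auto
  ultimately show "((\<lambda>x. x * L' x / sqrt_scaled m x) \<longlongrightarrow> 0) at_top"
    by (simp add: Lim_transform_eventually)
qed

lemma has_real_derivative_ln_sqrt_scaled_sq:
  fixes m m' :: "real \<Rightarrow> real"
  assumes even: "\<And>y. m (- y) = m y"
    and pos: "\<And>t. R < \<bar>t\<bar> \<Longrightarrow> 0 < m t" and "0 \<le> R" "R < \<bar>y\<bar>"
    and der: "(m has_real_derivative m' y) (at y)"
  shows "((\<lambda>t. ln (sqrt_scaled m (t\<^sup>2))) has_real_derivative 1 / y + m' y / m y) (at y)"
proof (rule has_field_derivative_transform_within_open)
  have "0 < y * y"
    using assms by (cases "y > 0") (auto simp: zero_less_mult_iff)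
  then have "((\<lambda>t. ln (t\<^sup>2) / 2) has_real_derivative 1 / y) (at y)"
    by (auto intro!: derivative_eq_intros simp: power2_eq_square)
  from DERIV_add[OF this DERIV_chain2[OF DERIV_ln_divide[OF pos] der]]
  show "((\<lambda>t. ln (t\<^sup>2) / 2 + ln (m t)) has_real_derivative 1 / y + m' y / m y) (at y)"
    using assms by simp
  show "open {t. R < \<bar>t\<bar>}" "y \<in> {t. R < \<bar>t\<bar>}"
    using assms by (auto intro!: open_Collect_less continuous_intros)
  show "ln (t\<^sup>2) / 2 + ln (m t) = ln (sqrt_scaled m (t\<^sup>2))" if "t \<in> {t. R < \<bar>t\<bar>}" for t
  proof -
    have "0 < \<bar>t\<bar>" "0 < m t"
      using that assms pos[of t] by auto
    moreover have "ln (t\<^sup>2) = 2 * ln \<bar>t\<bar>"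
      using \<open>0 < \<bar>t\<bar>\<close> ln_realpow[of "\<bar>t\<bar>" 2] by simp
    ultimately show ?thesis
      by (simp add: sqrt_scaled_sq[of m, OF even] ln_mult)
  qed
qed

lemma quotient_in_smallo_inverse_abs:
  fixes f :: "real \<Rightarrow> real"
  assumes "(f \<longlongrightarrow> 0) at_infinity"
  shows "(\<lambda>y. f y / y) \<in> o[at_infinity](\<lambda>y. 1 / \<bar>y\<bar>)"
proof (rule smalloI_tendsto)
  have "((\<lambda>y. \<bar>f y\<bar>) \<longlongrightarrow> 0) at_infinity"
    using tendsto_rabs_zero[OF assms] .
  moreover have "\<forall>\<^sub>F y in at_infinity. \<bar>f y\<bar> = \<bar>f y / y / (1 / \<bar>y\<bar>)\<bar>"
    using eventually_not_equal_at_infinity[of 0] by eventually_elim (simp add: abs_mult abs_divide)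
  ultimately have "((\<lambda>y. \<bar>f y / y / (1 / \<bar>y\<bar>)\<bar>) \<longlongrightarrow> 0) at_infinity"
    by (rule Lim_transform_eventually)
  then show "((\<lambda>y. f y / y / (1 / \<bar>y\<bar>)) \<longlongrightarrow> 0) at_infinity"
    by (simp only: tendsto_rabs_zero_iff)
  show "\<forall>\<^sub>F y in at_infinity. 1 / \<bar>y\<bar> \<noteq> (0 :: real)"
    using eventually_not_equal_at_infinity[of 0] by eventually_elim simp
qed

lemma abs_quotient_asymp_equiv_inverse_abs:
  fixes f :: "real \<Rightarrow> real"
  assumes "(f \<longlongrightarrow> -1) at_infinity"
  shows "(\<lambda>y. \<bar>f y / y\<bar>) \<sim>[at_infinity] (\<lambda>y. 1 / \<bar>y\<bar>)"
proof (rule asymp_equivI')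
  have "((\<lambda>y. \<bar>f y\<bar>) \<longlongrightarrow> \<bar>-1\<bar>) at_infinity"
    using tendsto_rabs[OF assms] .
  moreover have "\<forall>\<^sub>F y in at_infinity. \<bar>f y\<bar> = \<bar>f y / y\<bar> / (1 / \<bar>y\<bar>)"
    using eventually_not_equal_at_infinity[of 0] by eventually_elim (simp add: abs_divide)
  ultimately show "((\<lambda>y. \<bar>f y / y\<bar> / (1 / \<bar>y\<bar>)) \<longlongrightarrow> 1) at_infinity"
    by (simp add: Lim_transform_eventually)
qed

lemma slowly_varying_factor_if_elasticity_tendsto_minus_one:
  fixes m m' :: "real \<Rightarrow> real"
  assumes even: "\<And>y. m (- y) = m y"
    and pos: "\<forall>\<^sub>F y in at_infinity. 0 < m y"
    and der: "\<And>y. (m has_real_derivative m' y) (at y)"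
    and elasticity: "((\<lambda>y. y * m' y / m y) \<longlongrightarrow> -1) at_infinity"
  shows "\<exists>L :: real \<Rightarrow> real.
           slowly_varying L \<and>
           (\<forall>\<^sub>F x in at_top. L differentiable at x) \<and>
           m \<sim>[at_infinity] (\<lambda>y. L (y\<^sup>2) / \<bar>y\<bar>) \<and>
           (\<forall>\<^sub>F y in at_infinity.
              deriv (\<lambda>t. ln (m t)) y = - 1 / y + deriv (\<lambda>t. ln (L (t\<^sup>2))) y) \<and>
           (\<lambda>y. deriv (\<lambda>t. ln (L (t\<^sup>2))) y) \<in> o[at_infinity](\<lambda>y. 1 / \<bar>y\<bar>) \<and>
           (\<lambda>y. \<bar>deriv (\<lambda>t. ln (m t)) y\<bar>) \<sim>[at_infinity] (\<lambda>y. 1 / \<bar>y\<bar>)"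
proof (intro exI[of _ "sqrt_scaled m"] conjI)
  obtain R0 where "\<And>y. R0 \<le> norm y \<Longrightarrow> 0 < m y"
    using pos unfolding eventually_at_infinity by blast
  then obtain R where "0 \<le> R" and m_pos: "\<And>y. R < \<bar>y\<bar> \<Longrightarrow> 0 < m y"
    by (intro that[of "\<bar>R0\<bar>"]) auto
  have far: "\<forall>\<^sub>F y in at_infinity. R < \<bar>y\<bar> \<and> y \<noteq> 0"
    using \<open>0 \<le> R\<close> by (intro eventually_at_infinityI[of "R + 1"]) auto
  have deriv_ln_m: "\<forall>\<^sub>F y in at_infinity. deriv (\<lambda>t. ln (m t)) y = (y * m' y / m y) / y"
    using far
  proof eventually_elim
    case (elim y)
    have "((\<lambda>t. ln (m t)) has_real_derivative m' y / m y) (at y)"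
      using DERIV_chain2[OF DERIV_ln_divide[OF m_pos] der] elim by simp
    with elim show ?case
      by (simp add: DERIV_imp_deriv)
  qed
  have deriv_ln_L:
    "\<forall>\<^sub>F y in at_infinity. deriv (\<lambda>t. ln (sqrt_scaled m (t\<^sup>2))) y = (1 + y * m' y / m y) / y"
    using far
  proof eventually_elim
    case (elim y)
    have "deriv (\<lambda>t. ln (sqrt_scaled m (t\<^sup>2))) y = 1 / y + m' y / m y"
      using elim
      by (intro DERIV_imp_deriv has_real_derivative_ln_sqrt_scaled_sq[OF even m_pos \<open>0 \<le> R\<close> _ der]) auto
    with elim show ?case
      by (simp add: add_divide_distrib)
  qed
  show "slowly_varying (sqrt_scaled m)"
    by (rule slowly_varying_sqrt_scaled[OF filter_leD[OF at_top_le_at_infinity pos] der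
          filterlim_mono[OF elasticity order_refl at_top_le_at_infinity]])
  show "\<forall>\<^sub>F x in at_top. sqrt_scaled m differentiable at x"
    using eventually_gt_at_top[of 0]
    by eventually_elim (rule differentiableI[OF has_field_derivative_imp_has_derivative
          [OF has_real_derivative_sqrt_scaled[where m = m and m' = m', OF _ der]]])
  have "\<forall>\<^sub>F y in at_infinity. m y = sqrt_scaled m (y\<^sup>2) / \<bar>y\<bar>"
    using far by eventually_elim (simp add: sqrt_scaled_sq[of m, OF even])
  then show "m \<sim>[at_infinity] (\<lambda>y. sqrt_scaled m (y\<^sup>2) / \<bar>y\<bar>)"
    by (rule asymp_equiv_refl_ev)
  show "\<forall>\<^sub>F y in at_infinity.
      deriv (\<lambda>t. ln (m t)) y = - 1 / y + deriv (\<lambda>t. ln (sqrt_scaled m (t\<^sup>2))) y"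
    using deriv_ln_m deriv_ln_L by eventually_elim (simp add: add_divide_distrib)
  have "((\<lambda>y. 1 + y * m' y / m y) \<longlongrightarrow> 1 + -1) at_infinity"
    by (intro tendsto_intros elasticity)
  from quotient_in_smallo_inverse_abs[OF this[simplified]]
  show "(\<lambda>y. deriv (\<lambda>t. ln (sqrt_scaled m (t\<^sup>2))) y) \<in> o[at_infinity](\<lambda>y. 1 / \<bar>y\<bar>)"
    using landau_o.small.in_cong[OF deriv_ln_L] by simp
  from abs_quotient_asymp_equiv_inverse_abs[OF elasticity]
  show "(\<lambda>y. \<bar>deriv (\<lambda>t. ln (m t)) y\<bar>) \<sim>[at_infinity] (\<lambda>y. 1 / \<bar>y\<bar>)"
    by (rule asymp_equiv_transfer) (use deriv_ln_m in \<open>auto elim: eventually_mono\<close>)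
qed

section \<open>Gaussian scale mixtures\<close>

definition marginal_precision :: "real \<Rightarrow> real" where
  "marginal_precision g = g / (1 + g)"

(* The first argument stands for y^2 / 2, see normal_density_eq_gauss_kernel. *)
definition gauss_kernel :: "real \<Rightarrow> real \<Rightarrow> real" where
  "gauss_kernel a g = sqrt (marginal_precision g) * exp (- a * marginal_precision g)"

lemma marginal_precision_pos: "0 < g \<Longrightarrow> 0 < marginal_precision g"
  by (simp add: marginal_precision_def)

lemma marginal_precision_less_one: "0 < g \<Longrightarrow> marginal_precision g < 1"
  by (simp add: marginal_precision_def)

lemma marginal_precision_le: "0 < g \<Longrightarrow> marginal_precision g \<le> g"
  by (simp add: marginal_precision_def field_simps)

lemma marginal_precision_ge: "0 < g \<Longrightarrow> min g 1 / 2 \<le> marginal_precision g"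
  by (auto simp: marginal_precision_def min_def field_simps)

lemma abs_one_minus_marginal_precision_le:
  assumes "0 \<le> a" "0 < g"
  shows "\<bar>1 - 2 * a * marginal_precision g\<bar> \<le> 1 + 2 * a"
proof -
  have "0 \<le> a * marginal_precision g" "a * marginal_precision g \<le> a"
    using assms marginal_precision_pos[of g] marginal_precision_less_one[of g] by (simp_all add: mult_left_le)
  then show ?thesis
    by (simp add: abs_le_iff)
qed

lemma gauss_kernel_nonneg: "0 < g \<Longrightarrow> 0 \<le> gauss_kernel a g"
  by (simp add: gauss_kernel_def marginal_precision_pos less_imp_le)

lemma gauss_kernel_le_exp: "0 < g \<Longrightarrow> gauss_kernel a g \<le> exp (- a * marginal_precision g)"
  using marginal_precision_pos[of g] marginal_precision_less_one[of g]
  by (auto simp: gauss_kernel_def intro: mult_left_le_one_le)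

lemma gauss_kernel_le_exp_min:
  assumes "0 < g" "0 \<le> a"
  shows "gauss_kernel a g \<le> exp (- a * min g 1 / 2)"
proof -
  have "a * (min g 1 / 2) \<le> a * marginal_precision g"
    using assms marginal_precision_ge[of g] by (intro mult_left_mono) auto
  then have "exp (- a * marginal_precision g) \<le> exp (- a * min g 1 / 2)"
    by simp
  with gauss_kernel_le_exp[OF assms(1), of a] show ?thesis
    by linarith
qed

lemma gauss_kernel_le_one: "0 < g \<Longrightarrow> 0 \<le> a \<Longrightarrow> gauss_kernel a g \<le> 1"
proof -
  assume "0 < g" "0 \<le> a"
  then have "exp (- a * min g 1 / 2) \<le> 1"
    by simp
  with gauss_kernel_le_exp_min[OF \<open>0 < g\<close> \<open>0 \<le> a\<close>] show ?thesis
    by linarith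
qed

lemma gauss_kernel_one: "gauss_kernel a 1 = exp (- a / 2) / sqrt 2"
  by (simp add: gauss_kernel_def marginal_precision_def real_sqrt_divide)

lemma normal_density_eq_gauss_kernel:
  assumes "0 < g"
  shows "normal_density 0 (sqrt (1 + 1 / g)) y = gauss_kernel (y\<^sup>2 / 2) g / sqrt (2 * pi)"
proof -
  have var: "(sqrt (1 + 1 / g))\<^sup>2 = 1 / marginal_precision g"
    using assms by (simp add: marginal_precision_def add_pos_pos field_simps)
  show ?thesis
    using marginal_precision_pos[OF assms]
    by (simp add: normal_density_def gauss_kernel_def var real_sqrt_divide real_sqrt_mult field_simps)
qed

lemma nn_integral_normal_density_scale:
  assumes "0 < g"
  shows "(\<integral>\<^sup>+\<phi>. ennreal (normal_density \<phi> 1 y * normal_density 0 (1 / sqrt g) \<phi>) \<partial>lborel)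
    = ennreal (gauss_kernel (y\<^sup>2 / 2) g / sqrt (2 * pi))"
proof -
  have "(\<integral>\<^sup>+\<phi>. ennreal (normal_density \<phi> 1 y * normal_density 0 (1 / sqrt g) \<phi>) \<partial>lborel)
      = (\<integral>\<^sup>+\<phi>. ennreal (normal_density 0 1 (y - \<phi>) * normal_density 0 (1 / sqrt g) \<phi>) \<partial>lborel)"
    by (intro nn_integral_cong) (simp add: normal_density_def power2_commute)
  also have "\<dots> = normal_density 0 (sqrt (1 + 1 / g)) y"
    using conv_normal_density_zero_mean[of 1 "1 / sqrt g"] assms
    by (simp add: fun_eq_iff power_divide)
  finally show ?thesis
    using assms by (simp add: normal_density_eq_gauss_kernel)
qed

lemma gauss_kernel_div_sqrt_le_one:
  assumes "0 < g"
  shows "gauss_kernel (y\<^sup>2 / 2) g / sqrt (2 * pi) \<le> 1"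
proof -
  have "gauss_kernel (y\<^sup>2 / 2) g \<le> 1"
    by (rule gauss_kernel_le_one[OF assms]) simp
  moreover have "1 \<le> sqrt (2 * pi)"
    using pi_gt3 by simp
  ultimately have "gauss_kernel (y\<^sup>2 / 2) g \<le> sqrt (2 * pi)"
    by linarith
  then show ?thesis
    by (simp add: divide_le_eq_1)
qed

lemma nn_integral_joint_density:
  assumes "0 \<le> P g" and "g \<le> 0 \<Longrightarrow> P g = 0"
  shows "(\<integral>\<^sup>+\<phi>. ennreal (normal_density \<phi> 1 y * normal_density 0 (1 / sqrt g) \<phi> * P g) \<partial>lborel)
    = ennreal (gauss_kernel (y\<^sup>2 / 2) g / sqrt (2 * pi) * P g)"
proof (cases "0 < g")
  case True
  have "(\<integral>\<^sup>+\<phi>. ennreal (normal_density \<phi> 1 y * normal_density 0 (1 / sqrt g) \<phi> * P g) \<partial>lborel)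
      = ennreal (P g) * (\<integral>\<^sup>+\<phi>. ennreal (normal_density \<phi> 1 y * normal_density 0 (1 / sqrt g) \<phi>) \<partial>lborel)"
    using assms(1)
    by (subst nn_integral_cmult[symmetric]) (auto simp: normal_density_def normal_density_nonneg mult_ac
        simp flip: ennreal_mult intro!: nn_integral_cong)
  then show ?thesis
    using nn_integral_normal_density_scale[OF True, of y] assms(1) gauss_kernel_nonneg[OF True]
    by (simp add: mult.commute flip: ennreal_mult)
qed (use assms(2) in simp)

lemma integrable_joint_density:
  assumes P_int: "integrable lborel P"
    and P_nonneg: "\<And>g. 0 \<le> P g" and P_zero: "\<And>g. g \<le> 0 \<Longrightarrow> P g = 0"
  shows "integrable (lborel \<Otimes>\<^sub>M lborel)
    (\<lambda>(\<phi>, g). normal_density \<phi> 1 y * normal_density 0 (1 / sqrt g) \<phi> * P g)"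
proof (rule integrableI_nonneg)
  show meas: "(\<lambda>(\<phi>, g). normal_density \<phi> 1 y * normal_density 0 (1 / sqrt g) \<phi> * P g)
      \<in> borel_measurable (lborel \<Otimes>\<^sub>M lborel)"
  proof -
    have "(\<lambda>x. normal_density (fst x) 1 y * normal_density 0 (1 / sqrt (snd x)) (fst x))
        \<in> borel_measurable (lborel \<Otimes>\<^sub>M lborel)"
      unfolding normal_density_def by measurable
    from borel_measurable_times[OF this measurable_compose[OF measurable_snd borel_measurable_integrable[OF P_int]]]
    show ?thesis
      by (simp add: case_prod_beta')
  qed
  show "AE x in lborel \<Otimes>\<^sub>M lborel.
      0 \<le> (case x of (\<phi>, g) \<Rightarrow> normal_density \<phi> 1 y * normal_density 0 (1 / sqrt g) \<phi> * P g)"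
    using P_nonneg by (auto simp: normal_density_nonneg)
  have "(\<integral>\<^sup>+x. ennreal (case x of (\<phi>, g) \<Rightarrow> normal_density \<phi> 1 y * normal_density 0 (1 / sqrt g) \<phi> * P g)
      \<partial>(lborel \<Otimes>\<^sub>M lborel)) = (\<integral>\<^sup>+g. ennreal (gauss_kernel (y\<^sup>2 / 2) g / sqrt (2 * pi) * P g) \<partial>lborel)"
    using meas P_nonneg P_zero by (simp add: lborel_pair.nn_integral_snd[symmetric] nn_integral_joint_density)
  also have "\<dots> \<le> (\<integral>\<^sup>+g. ennreal (P g) \<partial>lborel)"
  proof (intro nn_integral_mono ennreal_leI)
    fix g :: real
    show "gauss_kernel (y\<^sup>2 / 2) g / sqrt (2 * pi) * P g \<le> P g"
    proof (cases "0 < g")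
      case True
      then show ?thesis
        using gauss_kernel_div_sqrt_le_one[OF True] gauss_kernel_nonneg[OF True] P_nonneg[of g]
        by (intro mult_left_le_one_le) auto
    qed (simp add: P_zero)
  qed
  also have "\<dots> < \<infinity>"
    using P_int P_nonneg by (simp add: integrable_iff_bounded)
  finally show "(\<integral>\<^sup>+x. ennreal (case x of (\<phi>, g) \<Rightarrow> normal_density \<phi> 1 y * normal_density 0 (1 / sqrt g) \<phi> * P g)
      \<partial>(lborel \<Otimes>\<^sub>M lborel)) < \<infinity>" .
qed

lemma marginal_density_scale_mixture:
  fixes p :: "real \<Rightarrow> real"
  assumes p_int: "set_integrable lborel {0<..} p" and p_nonneg: "\<And>g. 0 < g \<Longrightarrow> 0 \<le> p g"
  shows "marginal_density (scale_mixture_prior p) y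
    = (LINT g:{0<..}|lborel. gauss_kernel (y\<^sup>2 / 2) g * p g) / sqrt (2 * pi)"
proof -
  define P where "P = (\<lambda>g. indicator {0<..} g * p g)"
  have P: "integrable lborel P" "\<And>g. 0 \<le> P g" "\<And>g. g \<le> 0 \<Longrightarrow> P g = 0"
    using p_int p_nonneg by (auto simp: P_def set_integrable_def indicator_def)
  let ?F = "\<lambda>\<phi> g. normal_density \<phi> 1 y * normal_density 0 (1 / sqrt g) \<phi> * P g"
  have "marginal_density (scale_mixture_prior p) y = (LBINT \<phi>. LBINT g. ?F \<phi> g)"
    unfolding marginal_density_def scale_mixture_prior_def set_lebesgue_integral_def P_def
    by (simp flip: integral_mult_right_zero) (simp add: mult_ac)
  also have "\<dots> = (LBINT g. LBINT \<phi>. ?F \<phi> g)"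
    by (rule lborel_pair.Fubini_integral[OF integrable_joint_density[OF P], symmetric])
  also have "\<dots> = (LBINT g. gauss_kernel (y\<^sup>2 / 2) g / sqrt (2 * pi) * P g)"
  proof (intro Bochner_Integration.integral_cong refl)
    fix g :: real
    have "0 \<le> gauss_kernel (y\<^sup>2 / 2) g / sqrt (2 * pi) * P g"
      using P(2,3)[of g] gauss_kernel_nonneg[of g] by (cases "0 < g") auto
    moreover have "(\<lambda>\<phi>. ?F \<phi> g) \<in> borel_measurable lborel"
      unfolding normal_density_def by measurable
    ultimately show "(LBINT \<phi>. ?F \<phi> g) = gauss_kernel (y\<^sup>2 / 2) g / sqrt (2 * pi) * P g"
      using P(2) nn_integral_joint_density[where P = P and g = g and y = y, OF P(2,3)]
      by (subst integral_eq_nn_integral) (auto simp: normal_density_nonneg)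
  qed
  also have "\<dots> = (LINT g:{0<..}|lborel. gauss_kernel (y\<^sup>2 / 2) g * p g) / sqrt (2 * pi)"
    by (simp add: set_lebesgue_integral_def P_def mult_ac)
  finally show ?thesis .
qed

lemma abs_mult_gauss_kernel_le_one:
  assumes "0 < g"
  shows "\<bar>y * marginal_precision g * gauss_kernel (y\<^sup>2 / 2) g\<bar> \<le> 1"
proof -
  define u where "u = marginal_precision g"
  define z where "z = \<bar>y\<bar> * sqrt u"
  have u: "0 < u" "u < 1"
    using assms by (simp_all add: u_def marginal_precision_pos marginal_precision_less_one)
  have "z \<le> 1 + z\<^sup>2 / 2"
    using zero_le_power2[of "z - 1"] by (simp add: power2_eq_square algebra_simps)
  also have "\<dots> \<le> exp (z\<^sup>2 / 2)"
    by (rule exp_ge_add_one_self)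
  finally have "z * exp (- (z\<^sup>2 / 2)) \<le> 1"
    by (simp add: exp_minus field_simps)
  moreover have "\<bar>y * u * gauss_kernel (y\<^sup>2 / 2) g\<bar> = u * (z * exp (- (z\<^sup>2 / 2)))"
    using u by (simp add: gauss_kernel_def z_def u_def[symmetric] abs_mult power_mult_distrib mult_ac)
  moreover have "0 \<le> z"
    using u by (simp add: z_def)
  ultimately show ?thesis
    using u by (simp add: u_def[symmetric] mult_le_one)
qed

lemma has_real_derivative_gauss_kernel:
  assumes "0 < g"
  shows "((\<lambda>g. gauss_kernel a g) has_real_derivative
    (1 / (2 * sqrt (marginal_precision g)) - a * sqrt (marginal_precision g))
      * exp (- a * marginal_precision g) / (1 + g)\<^sup>2) (at g)"
proof -
  have u: "(marginal_precision has_real_derivative 1 / (1 + g)\<^sup>2) (at g)"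
    using assms unfolding marginal_precision_def[abs_def]
    by (auto intro!: derivative_eq_intros simp: power2_eq_square field_simps)
  have "((\<lambda>g. gauss_kernel a g) has_real_derivative
      inverse (sqrt (marginal_precision g)) / 2 * (1 / (1 + g)\<^sup>2) * exp (- a * marginal_precision g)
      + exp (- a * marginal_precision g) * (- a * (1 / (1 + g)\<^sup>2)) * sqrt (marginal_precision g)) (at g)"
    unfolding gauss_kernel_def[abs_def]
    by (intro DERIV_mult DERIV_chain2[OF DERIV_real_sqrt u] DERIV_chain2[OF DERIV_exp] DERIV_cmult u
        marginal_precision_pos assms)
  moreover have "inverse s / 2 * (1 / (1 + g)\<^sup>2) * e + e * (- a * (1 / (1 + g)\<^sup>2)) * s
      = (1 / (2 * s) - a * s) * e / (1 + g)\<^sup>2" if "0 < s" for s e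
    using that assms by (simp add: field_simps)
  ultimately show ?thesis
    using marginal_precision_pos[OF assms] by simp
qed

section \<open>Log-Cauchy precision priors\<close>

locale log_cauchy_prior =
  fixes c b :: real
  assumes c_pos: "0 < c" and b_pos: "0 < b"
begin

definition density :: "real \<Rightarrow> real" where
  "density g = c / (g * ((ln g)\<^sup>2 + b\<^sup>2))"

lemma ln_sq_plus_pos: "0 < (ln g)\<^sup>2 + b\<^sup>2"
  using b_pos by (simp add: add_nonneg_pos)

lemma density_pos: "0 < g \<Longrightarrow> 0 < density g"
  using c_pos ln_sq_plus_pos[of g] by (simp add: density_def)

lemma density_measurable [measurable]: "density \<in> borel_measurable lborel"
  unfolding density_def by measurable

lemma density_integrable: "set_integrable lborel {0<..} density"
proof -
  let ?F = "\<lambda>g. c / b * arctan (ln g / b)"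
  have "set_integrable lborel (einterval 0 \<infinity>) density"
  proof (rule interval_integral_FTC_nonneg(1)[where F = ?F])
    fix g assume "0 < ereal g" "ereal g < \<infinity>"
    then have "0 < g" by simp
    have "(?F has_real_derivative c / b * (inverse (1 + (ln g / b)\<^sup>2) * (1 / g / b))) (at g)"
      by (intro DERIV_cmult DERIV_chain2[OF DERIV_arctan] DERIV_cdivide DERIV_ln_divide \<open>0 < g\<close>)
    moreover have "c / b * (inverse (1 + (ln g / b)\<^sup>2) * (1 / g / b)) = density g"
    proof -
      have "inverse (1 + (ln g / b)\<^sup>2) = b\<^sup>2 / ((ln g)\<^sup>2 + b\<^sup>2)"
        using b_pos ln_sq_plus_pos[of g] by (simp add: power_divide field_simps)
      moreover have "c / b * (b\<^sup>2 / S * (1 / g / b)) = c / (g * S)" if "0 < S" for S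
        using b_pos \<open>0 < g\<close> that by (simp add: power2_eq_square field_simps)
      ultimately show ?thesis
        using ln_sq_plus_pos[of g] by (simp add: density_def)
    qed
    ultimately show "(?F has_real_derivative density g) (at g)"
      by simp
    show "isCont density g"
      using \<open>0 < g\<close> ln_sq_plus_pos[of g] unfolding density_def
      by (auto intro!: continuous_intros)
  next
    show "AE g in lborel. 0 < ereal g \<longrightarrow> ereal g < \<infinity> \<longrightarrow> 0 \<le> density g"
      using density_pos by (auto intro!: AE_I2 less_imp_le)
    have "(?F \<longlongrightarrow> c / b * (- (pi / 2))) (at_right 0)"
      using b_pos by (intro tendsto_intros filterlim_compose[OF tendsto_arctan_at_bot]) real_asymp
    then show "((?F \<circ> real_of_ereal) \<longlongrightarrow> c / b * (- (pi / 2))) (at_right 0)"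
      by (simp add: zero_ereal_def ereal_tendsto_simps)
    have "(?F \<longlongrightarrow> c / b * (pi / 2)) at_top"
      using b_pos by (intro tendsto_intros filterlim_compose[OF tendsto_arctan_at_top]) real_asymp
    then show "((?F \<circ> real_of_ereal) \<longlongrightarrow> c / b * (pi / 2)) (at_left \<infinity>)"
      by (simp add: ereal_tendsto_simps)
  qed simp
  then show ?thesis
    by (simp add: zero_ereal_def einterval_def greaterThan_def)
qed

definition weighted_density :: "real \<Rightarrow> real \<Rightarrow> real" where
  "weighted_density a g = gauss_kernel a g * density g"

(* For the marginal density m of y, mass (y^2 / 2) = sqrt (2 pi) m(y) and
   moment (y^2 / 2) = - sqrt (2 pi) y m'(y). *)
definition mass :: "real \<Rightarrow> real" where
  "mass a = (LINT g:{0<..}|lborel. weighted_density a g)"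

definition moment :: "real \<Rightarrow> real" where
  "moment a = (LINT g:{0<..}|lborel. 2 * a * marginal_precision g * weighted_density a g)"

lemma weighted_density_measurable [measurable]: "weighted_density a \<in> borel_measurable lborel"
  unfolding weighted_density_def gauss_kernel_def marginal_precision_def by measurable

lemma weighted_density_nonneg: "0 < g \<Longrightarrow> 0 \<le> weighted_density a g"
  by (simp add: weighted_density_def gauss_kernel_nonneg density_pos less_imp_le)

lemma weighted_density_le_exp_min:
  "0 < g \<Longrightarrow> 0 \<le> a \<Longrightarrow> weighted_density a g \<le> exp (- a * min g 1 / 2) * density g"
  using gauss_kernel_le_exp_min density_pos
  by (simp add: weighted_density_def mult_right_mono less_imp_le)

lemma weighted_density_le_density: "0 < g \<Longrightarrow> 0 \<le> a \<Longrightarrow> weighted_density a g \<le> density g"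
  using gauss_kernel_le_one density_pos
  by (simp add: weighted_density_def mult_left_le_one_le less_imp_le)

lemma set_integrable_weighted_density:
  assumes "0 \<le> a" "S \<subseteq> {0<..}" "S \<in> sets lborel"
  shows "set_integrable lborel S (weighted_density a)"
proof (rule set_integrable_bound[OF set_integrable_subset[OF density_integrable assms(3,2)]])
  show "set_borel_measurable lborel S (weighted_density a)"
    using assms(3) by (simp add: set_borel_measurable_def)
  show "AE g in lborel. g \<in> S \<longrightarrow> norm (weighted_density a g) \<le> norm (density g)"
    using assms weighted_density_le_density weighted_density_nonneg density_pos
    by (intro AE_I2) (auto simp: less_imp_le)
qed

lemma set_integrable_bounded_mult_weighted_density:
  assumes "0 \<le> a" "S \<subseteq> {0<..}" "S \<in> sets lborel" "h \<in> borel_measurable lborel"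
    and "\<And>g. g \<in> S \<Longrightarrow> \<bar>h g\<bar> \<le> B"
  shows "set_integrable lborel S (\<lambda>g. h g * weighted_density a g)"
  using assms by (intro set_integrable_bounded_mult set_integrable_weighted_density)

definition mass_lower_bound :: "real \<Rightarrow> real" where
  "mass_lower_bound a = c * exp (-2) / (2 * sqrt (2 * a) * ((ln a)\<^sup>2 + b\<^sup>2))"

lemma mass_lower_bound_pos: "0 < a \<Longrightarrow> 0 < mass_lower_bound a"
  unfolding mass_lower_bound_def using c_pos ln_sq_plus_pos[of a]
  by (intro divide_pos_pos mult_pos_pos) auto

lemma density_ge:
  assumes "2 \<le> a" "1 / a \<le> g" "g \<le> 2 / a"
  shows "c * a / (2 * ((ln a)\<^sup>2 + b\<^sup>2)) \<le> density g"
proof -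
  have "0 < a"
    using assms(1) by simp
  then have "0 < 1 / a" "2 / a \<le> 1"
    using assms(1) by simp_all
  then have "0 < g" "g \<le> 1"
    using assms(2,3) by linarith+
  have "1 \<le> a * g"
    using assms \<open>0 < a\<close> by (simp add: field_simps)
  then have "0 \<le> ln (a * g)"
    by simp
  then have "- ln a \<le> ln g"
    using ln_mult[of a g] \<open>0 < a\<close> \<open>0 < g\<close> by simp
  moreover have "ln g \<le> 0" "0 \<le> ln a"
    using \<open>0 < g\<close> \<open>g \<le> 1\<close> assms by auto
  ultimately have "(ln g)\<^sup>2 \<le> (ln a)\<^sup>2"
    by (simp add: abs_le_square_iff[symmetric] abs_le_iff)
  then have "c / ((2 / a) * ((ln a)\<^sup>2 + b\<^sup>2)) \<le> density g"
    unfolding density_def using assms c_pos \<open>0 < g\<close> \<open>0 < a\<close> ln_sq_plus_pos[of g] ln_sq_plus_pos[of a]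
    by (intro divide_left_mono mult_mono) (auto intro!: mult_pos_pos divide_pos_pos)
  then show ?thesis
    by simp
qed

lemma weighted_density_ge:
  assumes "2 \<le> a" "1 / a \<le> g" "g \<le> 2 / a"
  shows "sqrt (1 / (2 * a)) * exp (-2) * (c * a / (2 * ((ln a)\<^sup>2 + b\<^sup>2))) \<le> weighted_density a g"
proof -
  have "0 < a"
    using assms(1) by simp
  then have "0 < 1 / a" "2 / a \<le> 1"
    using assms(1) by simp_all
  then have "0 < g" "g \<le> 1"
    using assms(2,3) by linarith+
  have "a * marginal_precision g \<le> a * g" "a * g \<le> 2"
    using marginal_precision_le[OF \<open>0 < g\<close>] assms \<open>0 < a\<close> by (simp_all add: field_simps)
  then have "exp (-2) \<le> exp (- a * marginal_precision g)"
    by simp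
  moreover have "1 / (2 * a) \<le> marginal_precision g"
    using marginal_precision_ge[OF \<open>0 < g\<close>] \<open>g \<le> 1\<close> assms by (auto simp: min_def)
  ultimately show ?thesis
    unfolding weighted_density_def gauss_kernel_def
    using density_ge[OF assms] c_pos \<open>0 < a\<close> ln_sq_plus_pos[of a] marginal_precision_pos[OF \<open>0 < g\<close>]
    by (intro mult_mono) auto
qed

lemma mass_ge:
  assumes "2 \<le> a"
  shows "mass_lower_bound a \<le> mass a"
proof -
  define m where "m = sqrt (1 / (2 * a)) * exp (-2) * (c * a / (2 * ((ln a)\<^sup>2 + b\<^sup>2)))"
  have "0 < a"
    using assms by simp
  have I: "{1/a..2/a} \<subseteq> {0<..}"
    using \<open>0 < a\<close> by (auto intro: less_le_trans[of 0 "1/a"])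
  have "m * (1 / a) = (LINT g:{1/a..2/a}|lborel. m)"
    using \<open>0 < a\<close> by (simp add: set_integral_const field_simps)
  also have "\<dots> \<le> (LINT g:{1/a..2/a}|lborel. weighted_density a g)"
    using weighted_density_ge[OF assms] \<open>0 < a\<close> I
    by (intro set_integral_mono set_integrable_weighted_density borel_integrable_atLeastAtMost')
      (auto simp: m_def)
  also have "\<dots> \<le> mass a"
    unfolding mass_def using \<open>0 < a\<close> weighted_density_nonneg
    by (intro set_integral_mono_set[OF set_integrable_weighted_density I]) auto
  finally show ?thesis
    using \<open>0 < a\<close> by (simp add: m_def mass_lower_bound_def real_sqrt_divide field_simps)
qed

lemma mass_pos: "2 \<le> a \<Longrightarrow> 0 < mass a"
  using mass_ge[of a] mass_lower_bound_pos[of a] by simp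

(* psi g = g (1 + g) density g, the factor against which mass - moment is integrated by parts. *)
definition psi :: "real \<Rightarrow> real" where
  "psi g = (1 + g) * c / ((ln g)\<^sup>2 + b\<^sup>2)"

definition psi_ratio :: "real \<Rightarrow> real" where
  "psi_ratio g = g - 2 * (1 + g) * ln g / ((ln g)\<^sup>2 + b\<^sup>2)"

lemma has_real_derivative_psi:
  assumes "0 < g"
  shows "(psi has_real_derivative psi_ratio g * density g) (at g)"
proof -
  have "((\<lambda>g. (1 + g) * c / ((ln g)\<^sup>2 + b\<^sup>2)) has_real_derivative
      (c * ((ln g)\<^sup>2 + b\<^sup>2) - (1 + g) * c * (2 * ln g / g)) / (((ln g)\<^sup>2 + b\<^sup>2) * ((ln g)\<^sup>2 + b\<^sup>2))) (at g)"
    using assms ln_sq_plus_pos[of g]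
    by (intro DERIV_divide) (auto intro!: derivative_eq_intros simp: power2_eq_square field_simps)
  moreover have "(c * S - (1 + g) * c * (2 * L / g)) / (S * S) = (g - 2 * (1 + g) * L / S) * (c / (g * S))"
    if "0 < S" for S L
    using that assms by (simp add: field_simps)
  ultimately show ?thesis
    using ln_sq_plus_pos[of g] by (simp add: psi_def[abs_def] psi_ratio_def density_def)
qed

lemma has_real_derivative_gauss_kernel_psi:
  assumes "0 < g"
  shows "((\<lambda>g. 2 * gauss_kernel a g * psi g) has_real_derivative
    (1 - 2 * a * marginal_precision g) * weighted_density a g + 2 * (psi_ratio g * weighted_density a g)) (at g)"
proof -
  define s where "s = sqrt (marginal_precision g)"
  define e where "e = exp (- a * marginal_precision g)"
  define S where "S = (ln g)\<^sup>2 + b\<^sup>2"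
  have "0 < s" "0 < S"
    using marginal_precision_pos[OF assms] ln_sq_plus_pos by (simp_all add: s_def S_def)
  have u: "marginal_precision g = s * s"
    using marginal_precision_pos[OF assms] by (simp add: s_def)
  have g: "s * s * (1 + g) = g"
    using assms by (simp add: u[symmetric] marginal_precision_def)
  have psi: "psi g = (1 + g) * c / S"
    by (simp add: psi_def S_def)
  have wd: "weighted_density a g = s * e * (c / (g * S))"
    by (simp add: weighted_density_def gauss_kernel_def density_def s_def e_def S_def)
  \<comment> \<open>The integration by parts identity; it rests on \<open>g = u (1 + g)\<close> for \<open>u = s\<^sup>2\<close>.\<close>
  have "2 * ((1 / (2 * s) - a * s) * e / t\<^sup>2) * (t * c / S) = (1 - 2 * a * (s * s)) * (s * e) * (c / (s * s * t * S))"
    if "0 < t" for t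
    using \<open>0 < s\<close> \<open>0 < S\<close> that by (simp add: power2_eq_square field_simps)
  then have "2 * ((1 / (2 * s) - a * s) * e / (1 + g)\<^sup>2) * psi g
      = (1 - 2 * a * (s * s)) * (s * e) * (c / (s * s * (1 + g) * S))"
    using assms by (simp add: psi)
  also have "\<dots> = (1 - 2 * a * marginal_precision g) * weighted_density a g"
    by (simp only: g) (simp add: wd u)
  finally have key: "2 * ((1 / (2 * sqrt (marginal_precision g)) - a * sqrt (marginal_precision g))
      * exp (- a * marginal_precision g) / (1 + g)\<^sup>2) * psi g
      = (1 - 2 * a * marginal_precision g) * weighted_density a g"
    by (simp only: s_def e_def)
  have eq: "2 * ((1 / (2 * sqrt (marginal_precision g)) - a * sqrt (marginal_precision g))
      * exp (- a * marginal_precision g) / (1 + g)\<^sup>2) * psi g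
      + psi_ratio g * density g * (2 * gauss_kernel a g)
      = (1 - 2 * a * marginal_precision g) * weighted_density a g + 2 * (psi_ratio g * weighted_density a g)"
    unfolding key by (simp add: weighted_density_def algebra_simps)
  from DERIV_mult[OF DERIV_cmult[where c=2, OF has_real_derivative_gauss_kernel[OF assms, of a]]
      has_real_derivative_psi[OF assms]]
  show ?thesis
    by (simp only: eq)
qed

lemma psi_ratio_measurable [measurable]: "psi_ratio \<in> borel_measurable lborel"
  unfolding psi_ratio_def by measurable

lemma continuous_on_psi_ratio: "continuous_on {0<..} psi_ratio"
  unfolding psi_ratio_def using b_pos by (intro continuous_intros) auto

lemma psi_ratio_tendsto_zero: "(psi_ratio \<longlongrightarrow> 0) (at_right 0)"
  unfolding psi_ratio_def using b_pos by real_asymp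

lemma psi_ratio_small:
  assumes "0 < \<epsilon>"
  obtains d where "0 < d" "d \<le> 1" "\<And>g. 0 < g \<Longrightarrow> g < d \<Longrightarrow> \<bar>psi_ratio g\<bar> \<le> \<epsilon>"
proof -
  have "\<forall>\<^sub>F g in at_right 0. \<bar>psi_ratio g\<bar> < \<epsilon>"
    using tendstoD[OF psi_ratio_tendsto_zero assms] by (simp add: dist_real_def)
  then obtain d where "0 < d" "\<And>g. 0 < g \<Longrightarrow> g < d \<Longrightarrow> \<bar>psi_ratio g\<bar> < \<epsilon>"
    by (auto simp: eventually_at_right_field)
  then show thesis
    by (intro that[of "min d 1"]) (auto simp: less_imp_le)
qed

lemma psi_ratio_bounded:
  obtains K where "\<And>g. 0 < g \<Longrightarrow> g \<le> 1 \<Longrightarrow> \<bar>psi_ratio g\<bar> \<le> K"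
proof -
  obtain d where d: "0 < d" "d \<le> 1" "\<And>g. 0 < g \<Longrightarrow> g < d \<Longrightarrow> \<bar>psi_ratio g\<bar> \<le> 1"
    using psi_ratio_small[of 1] by auto
  have "compact (psi_ratio ` {d..1})"
    using d by (intro compact_continuous_image continuous_on_subset[OF continuous_on_psi_ratio]) auto
  then obtain K where K: "\<And>g. g \<in> {d..1} \<Longrightarrow> \<bar>psi_ratio g\<bar> \<le> K"
    by (meson compact_imp_bounded bounded_real imageI)
  show thesis
  proof (rule that[of "max 1 K"])
    fix g :: real assume "0 < g" "g \<le> 1"
    then show "\<bar>psi_ratio g\<bar> \<le> max 1 K"
      using d(3)[of g] K[of g] by (cases "g < d") auto
  qed
qed

lemma einterval_0_1: "einterval 0 1 = {0<..<1::real}"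
  by (auto simp: einterval_def zero_ereal_def one_ereal_def)

lemma set_integrable_moment_factor:
  assumes "0 \<le> a" "S \<subseteq> {0<..}" "S \<in> sets lborel"
  shows "set_integrable lborel S (\<lambda>g. (1 - 2 * a * marginal_precision g) * weighted_density a g)"
proof (rule set_integrable_bounded_mult_weighted_density[OF assms, where B = "1 + 2 * a"])
  show "(\<lambda>g. 1 - 2 * a * marginal_precision g) \<in> borel_measurable lborel"
    unfolding marginal_precision_def by measurable
  show "\<bar>1 - 2 * a * marginal_precision g\<bar> \<le> 1 + 2 * a" if "g \<in> S" for g
    using that assms by (intro abs_one_minus_marginal_precision_le) auto
qed

lemma set_integrable_psi_ratio:
  assumes "0 \<le> a"
  shows "set_integrable lborel {0<..<1} (\<lambda>g. psi_ratio g * weighted_density a g)"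
proof -
  obtain K where "\<And>g. 0 < g \<Longrightarrow> g \<le> 1 \<Longrightarrow> \<bar>psi_ratio g\<bar> \<le> K"
    using psi_ratio_bounded by blast
  with assms show ?thesis
    by (intro set_integrable_bounded_mult_weighted_density[where B = K]) auto
qed

lemma set_integral_unit_interval_by_parts:
  assumes "0 \<le> a"
  shows "(LINT g:{0<..<1}|lborel. (1 - 2 * a * marginal_precision g) * weighted_density a g
      + 2 * (psi_ratio g * weighted_density a g)) = 2 * gauss_kernel a 1 * psi 1"
proof -
  let ?F = "\<lambda>g. 2 * gauss_kernel a g * psi g"
  let ?f = "\<lambda>g. (1 - 2 * a * marginal_precision g) * weighted_density a g + 2 * (psi_ratio g * weighted_density a g)"
  have "(LBINT g=0..1. ?f g) = ?F 1 - 0"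
  proof (rule interval_integral_FTC_integrable)
    fix g assume "0 < ereal g" "ereal g < 1"
    then have "0 < g"
      by (simp add: zero_ereal_def)
    show "(?F has_vector_derivative ?f g) (at g)"
      using has_real_derivative_gauss_kernel_psi[OF \<open>0 < g\<close>]
      by (simp add: has_real_derivative_iff_has_vector_derivative)
    show "isCont ?f g"
      using \<open>0 < g\<close> ln_sq_plus_pos[of g]
      unfolding weighted_density_def gauss_kernel_def marginal_precision_def density_def psi_ratio_def
      by (intro continuous_intros) (auto simp: add_pos_pos)
  next
    show "set_integrable lborel (einterval 0 1) ?f"
      unfolding einterval_0_1 using assms set_integrable_psi_ratio[OF assms]
      by (intro set_integral_add set_integrable_moment_factor) auto
    have "(?F \<longlongrightarrow> 0) (at_right 0)"
      unfolding gauss_kernel_def marginal_precision_def psi_def using b_pos by real_asymp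
    then show "((?F \<circ> real_of_ereal) \<longlongrightarrow> 0) (at_right 0)"
      by (simp add: zero_ereal_def ereal_tendsto_simps)
    have "isCont ?F 1"
      by (rule DERIV_isCont[OF has_real_derivative_gauss_kernel_psi]) simp
    then have "(?F \<longlongrightarrow> ?F 1) (at_left 1)"
      by (simp add: isCont_def filterlim_at_split)
    then show "((?F \<circ> real_of_ereal) \<longlongrightarrow> ?F 1) (at_left 1)"
      by (simp add: one_ereal_def ereal_tendsto_simps)
  qed simp
  then show ?thesis
    by (simp add: interval_lebesgue_integral_def einterval_0_1)
qed

lemma mass_sub_moment_eq_integral:
  assumes "0 \<le> a"
  shows "mass a - moment a = (LINT g:{0<..}|lborel. (1 - 2 * a * marginal_precision g) * weighted_density a g)"
proof -
  have "set_integrable lborel {0<..} (\<lambda>g. 2 * a * marginal_precision g * weighted_density a g)"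
  proof (rule set_integrable_bounded_mult_weighted_density[OF assms, where B = "2 * a"])
    show "(\<lambda>g. 2 * a * marginal_precision g) \<in> borel_measurable lborel"
      unfolding marginal_precision_def by measurable
    show "\<bar>2 * a * marginal_precision g\<bar> \<le> 2 * a" if "g \<in> {0<..}" for g
      using that assms marginal_precision_pos[of g] marginal_precision_less_one[of g]
      by (simp add: abs_mult mult_left_le)
  qed auto
  from set_integral_diff(2)[OF set_integrable_weighted_density[OF assms, of "{0<..}"] this]
  show ?thesis
    by (simp add: mass_def moment_def left_diff_distrib)
qed

lemma mass_sub_moment:
  assumes "0 \<le> a"
  shows "mass a - moment a = 2 * gauss_kernel a 1 * psi 1
    - 2 * (LINT g:{0<..<1}|lborel. psi_ratio g * weighted_density a g)
    + (LINT g:{1..}|lborel. (1 - 2 * a * marginal_precision g) * weighted_density a g)"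
proof -
  let ?h = "\<lambda>g. (1 - 2 * a * marginal_precision g) * weighted_density a g"
  have int: "set_integrable lborel {0<..<1} ?h" "set_integrable lborel {1..} ?h"
    using assms by (auto intro!: set_integrable_moment_factor)
  have "{0<..} = {0<..<1} \<union> {1::real..}" "{0<..<1} \<inter> {1::real..} = {}"
    by auto
  with int have "mass a - moment a = (LINT g:{0<..<1}|lborel. ?h g) + (LINT g:{1..}|lborel. ?h g)"
    using mass_sub_moment_eq_integral[OF assms] by (simp add: set_integral_Un)
  moreover have "(LINT g:{0<..<1}|lborel. ?h g)
      + 2 * (LINT g:{0<..<1}|lborel. psi_ratio g * weighted_density a g) = 2 * gauss_kernel a 1 * psi 1"
    using set_integral_unit_interval_by_parts[OF assms] int set_integrable_psi_ratio[OF assms]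
    by (simp add: set_integral_add)
  ultimately show ?thesis
    by linarith
qed

lemma abs_tail_integral_le:
  assumes "0 \<le> a"
  shows "\<bar>LINT g:{1..}|lborel. (1 - 2 * a * marginal_precision g) * weighted_density a g\<bar>
    \<le> (1 + 2 * a) * exp (- a / 2) * (LINT g:{0<..}|lborel. density g)"
proof -
  let ?h = "\<lambda>g. (1 - 2 * a * marginal_precision g) * weighted_density a g"
  have int_h: "set_integrable lborel {1..} ?h"
    using assms by (intro set_integrable_moment_factor) auto
  have int_d: "set_integrable lborel {1..} density"
    by (rule set_integrable_subset[OF density_integrable]) auto
  have "\<bar>LINT g:{1..}|lborel. ?h g\<bar> \<le> (LINT g:{1..}|lborel. \<bar>?h g\<bar>)"
    using set_integral_norm_bound[OF int_h] by simp
  also have "\<dots> \<le> (LINT g:{1..}|lborel. (1 + 2 * a) * exp (- a / 2) * density g)"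
  proof (rule set_integral_mono[OF set_integrable_abs[OF int_h]])
    show "set_integrable lborel {1..} (\<lambda>g. (1 + 2 * a) * exp (- a / 2) * density g)"
      using int_d by simp
    fix g :: real assume "g \<in> {1..}"
    then have "0 < g" "min g 1 = 1"
      by auto
    then have "0 \<le> weighted_density a g" "weighted_density a g \<le> exp (- a / 2) * density g"
      "\<bar>1 - 2 * a * marginal_precision g\<bar> \<le> 1 + 2 * a"
      using weighted_density_nonneg weighted_density_le_exp_min[OF _ assms]
        abs_one_minus_marginal_precision_le[OF assms] by fastforce+
    then show "\<bar>?h g\<bar> \<le> (1 + 2 * a) * exp (- a / 2) * density g"
      by (simp add: abs_mult mult_mono mult.assoc)
  qed
  also have "\<dots> \<le> (1 + 2 * a) * exp (- a / 2) * (LINT g:{0<..}|lborel. density g)"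
    using assms density_pos
    by (simp, intro mult_left_mono set_integral_mono_set[OF density_integrable]) (auto simp: less_imp_le)
  finally show ?thesis .
qed

lemma abs_psi_ratio_weighted_density_le:
  assumes "0 \<le> a" "0 < g" "g < 1" "0 \<le> \<epsilon>"
    and small: "\<And>g. 0 < g \<Longrightarrow> g < d \<Longrightarrow> \<bar>psi_ratio g\<bar> \<le> \<epsilon>"
    and bounded: "\<And>g. 0 < g \<Longrightarrow> g \<le> 1 \<Longrightarrow> \<bar>psi_ratio g\<bar> \<le> K"
  shows "\<bar>psi_ratio g * weighted_density a g\<bar> \<le> \<epsilon> * weighted_density a g + K * exp (- a * d / 2) * density g"
proof -
  have w: "0 \<le> weighted_density a g" and "0 < density g"
    using assms weighted_density_nonneg density_pos by auto
  have "0 \<le> K"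
    using bounded[of 1] by simp
  have "\<bar>psi_ratio g\<bar> * weighted_density a g \<le> \<epsilon> * weighted_density a g + K * exp (- a * d / 2) * density g"
  proof (cases "g < d")
    case True
    then have "\<bar>psi_ratio g\<bar> * weighted_density a g \<le> \<epsilon> * weighted_density a g"
      using assms small[of g] w by (intro mult_right_mono) auto
    moreover have "0 \<le> K * exp (- a * d / 2) * density g"
      using \<open>0 < density g\<close> \<open>0 \<le> K\<close> by simp
    ultimately show ?thesis
      by linarith
  next
    case False
    then have "weighted_density a g \<le> exp (- a * d / 2) * density g"
      using assms weighted_density_le_exp_min[of g a] \<open>0 < density g\<close>
      by (auto simp: mult_left_mono intro: order_trans)
    then have "\<bar>psi_ratio g\<bar> * weighted_density a g \<le> K * (exp (- a * d / 2) * density g)"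
      using assms bounded[of g] w \<open>0 \<le> K\<close> by (intro mult_mono) auto
    then show ?thesis
      using w assms(4) by (simp add: add_increasing mult.assoc)
  qed
  then show ?thesis
    using w by (simp add: abs_mult)
qed

lemma abs_integral_psi_ratio_le:
  assumes "0 \<le> a" "0 < d"
    and small: "\<And>g. 0 < g \<Longrightarrow> g < d \<Longrightarrow> \<bar>psi_ratio g\<bar> \<le> \<epsilon>"
    and bounded: "\<And>g. 0 < g \<Longrightarrow> g \<le> 1 \<Longrightarrow> \<bar>psi_ratio g\<bar> \<le> K"
  shows "\<bar>LINT g:{0<..<1}|lborel. psi_ratio g * weighted_density a g\<bar>
    \<le> \<epsilon> * mass a + K * exp (- a * d / 2) * (LINT g:{0<..}|lborel. density g)"
proof -
  have "0 \<le> \<epsilon>" "0 \<le> K"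
    using small[of "d / 2"] bounded[of 1] \<open>0 < d\<close> by auto
  have int_r: "set_integrable lborel {0<..<1} (\<lambda>g. psi_ratio g * weighted_density a g)"
    using assms(1) by (rule set_integrable_psi_ratio)
  have int_w: "set_integrable lborel {0<..<1} (weighted_density a)"
    using assms by (intro set_integrable_weighted_density) auto
  have int_d: "set_integrable lborel {0<..<1} density"
    by (rule set_integrable_subset[OF density_integrable]) auto
  have "\<bar>LINT g:{0<..<1}|lborel. psi_ratio g * weighted_density a g\<bar>
      \<le> (LINT g:{0<..<1}|lborel. \<bar>psi_ratio g * weighted_density a g\<bar>)"
    using set_integral_norm_bound[OF int_r] by simp
  also have "\<dots> \<le> (LINT g:{0<..<1}|lborel. \<epsilon> * weighted_density a g + K * exp (- a * d / 2) * density g)"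
    using int_w int_d assms(1) \<open>0 \<le> \<epsilon>\<close> small bounded
    by (intro set_integral_mono set_integrable_abs int_r set_integral_add abs_psi_ratio_weighted_density_le) auto
  also have "\<dots> = \<epsilon> * (LINT g:{0<..<1}|lborel. weighted_density a g)
      + K * exp (- a * d / 2) * (LINT g:{0<..<1}|lborel. density g)"
    using int_w int_d by (simp add: set_integral_add)
  also have "\<dots> \<le> \<epsilon> * mass a + K * exp (- a * d / 2) * (LINT g:{0<..}|lborel. density g)"
  proof (intro add_mono mult_left_mono)
    show "(LINT g:{0<..<1}|lborel. weighted_density a g) \<le> mass a"
      unfolding mass_def using assms(1)
      by (intro set_integral_mono_set set_integrable_weighted_density) (auto intro: weighted_density_nonneg)
    show "(LINT g:{0<..<1}|lborel. density g) \<le> (LINT g:{0<..}|lborel. density g)"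
      by (intro set_integral_mono_set density_integrable) (auto intro: less_imp_le density_pos)
  qed (use \<open>0 \<le> \<epsilon>\<close> \<open>0 \<le> K\<close> in auto)
  finally show ?thesis .
qed

lemma abs_mass_sub_moment_le_explicit:
  assumes "0 \<le> a" "0 < d"
    and small: "\<And>g. 0 < g \<Longrightarrow> g < d \<Longrightarrow> \<bar>psi_ratio g\<bar> \<le> \<epsilon>"
    and bounded: "\<And>g. 0 < g \<Longrightarrow> g \<le> 1 \<Longrightarrow> \<bar>psi_ratio g\<bar> \<le> K"
  shows "\<bar>mass a - moment a\<bar> \<le> 2 * \<epsilon> * mass a + 2 * gauss_kernel a 1 * psi 1
    + (2 * K * exp (- a * d / 2) + (1 + 2 * a) * exp (- a / 2)) * (LINT g:{0<..}|lborel. density g)"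
proof -
  define P where "P = (LINT g:{0<..}|lborel. density g)"
  define M where "M = (LINT g:{0<..<1}|lborel. psi_ratio g * weighted_density a g)"
  define T where "T = (LINT g:{1..}|lborel. (1 - 2 * a * marginal_precision g) * weighted_density a g)"
  have "mass a - moment a = 2 * gauss_kernel a 1 * psi 1 - 2 * M + T"
    using mass_sub_moment[OF assms(1)] by (simp add: M_def T_def)
  moreover have "\<bar>M\<bar> \<le> \<epsilon> * mass a + K * exp (- a * d / 2) * P"
    unfolding M_def P_def using abs_integral_psi_ratio_le[OF assms] .
  moreover have "\<bar>T\<bar> \<le> (1 + 2 * a) * exp (- a / 2) * P"
    unfolding T_def P_def using abs_tail_integral_le[OF assms(1)] .
  moreover have "0 \<le> 2 * gauss_kernel a 1 * psi 1"
    using gauss_kernel_nonneg[of 1 a] c_pos by (simp add: psi_def)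
  moreover have "(2 * K * exp (- a * d / 2) + (1 + 2 * a) * exp (- a / 2)) * P
      = 2 * (K * exp (- a * d / 2) * P) + (1 + 2 * a) * exp (- a / 2) * P"
    by (simp add: algebra_simps)
  ultimately show ?thesis
    unfolding P_def[symmetric] by (intro abs_leI) (linarith | simp add: abs_le_iff)+
qed

lemma abs_mass_sub_moment_le:
  assumes "0 < \<epsilon>"
  obtains d C where "0 < d" "0 \<le> C"
    "\<And>a. 0 \<le> a \<Longrightarrow> \<bar>mass a - moment a\<bar> \<le> 2 * \<epsilon> * mass a + C * ((1 + a) * exp (- d * a))"
proof -
  obtain d where d: "0 < d" "d \<le> 1" "\<And>g. 0 < g \<Longrightarrow> g < d \<Longrightarrow> \<bar>psi_ratio g\<bar> \<le> \<epsilon>"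
    using psi_ratio_small[OF assms] by blast
  obtain K where K: "\<And>g. 0 < g \<Longrightarrow> g \<le> 1 \<Longrightarrow> \<bar>psi_ratio g\<bar> \<le> K"
    using psi_ratio_bounded by blast
  define P where "P = (LINT g:{0<..}|lborel. density g)"
  define C0 where "C0 = 4 * c / (sqrt 2 * b\<^sup>2)"
  have "0 \<le> K" "0 \<le> C0"
    using K[of 1] c_pos by (simp_all add: C0_def)
  have "0 \<le> P"
    unfolding P_def set_lebesgue_integral_def using density_pos
    by (intro integral_nonneg_AE AE_I2) (simp add: indicator_def less_imp_le)
  show thesis
  proof (rule that[of "d / 2" "C0 + 2 * K * P + 2 * P"])
    show "0 < d / 2" "0 \<le> C0 + 2 * K * P + 2 * P"
      using d(1) \<open>0 \<le> K\<close> \<open>0 \<le> P\<close> \<open>0 \<le> C0\<close> by simp_all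
    fix a :: real assume "0 \<le> a"
    define E where "E = exp (- (d / 2) * a)"
    have "d * a \<le> a"
      using d(1,2) \<open>0 \<le> a\<close> by (intro mult_left_le_one_le) auto
    then have E: "exp (- a / 2) \<le> E" "E \<le> (1 + a) * E" "exp (- a * d / 2) = E"
      using \<open>0 \<le> a\<close> by (simp_all add: E_def mult.commute)
    have "2 * gauss_kernel a 1 * psi 1 = C0 * exp (- a / 2)"
      by (simp add: C0_def gauss_kernel_one psi_def field_simps)
    also have "\<dots> \<le> C0 * ((1 + a) * E)"
      using E \<open>0 \<le> C0\<close> by (intro mult_left_mono) auto
    finally have "2 * gauss_kernel a 1 * psi 1 \<le> C0 * ((1 + a) * E)" .
    moreover have "(2 * K * E + (1 + 2 * a) * exp (- a / 2)) * P \<le> (2 * K * P + 2 * P) * ((1 + a) * E)"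
    proof -
      have "(1 + 2 * a) * exp (- a / 2) \<le> (2 * (1 + a)) * E"
        using E \<open>0 \<le> a\<close> by (intro mult_mono) auto
      then have "2 * K * E + (1 + 2 * a) * exp (- a / 2) \<le> (2 * K + 2) * ((1 + a) * E)"
        using E \<open>0 \<le> K\<close> mult_left_mono[OF E(2), of "2 * K"] by (simp add: algebra_simps)
      then have "(2 * K * E + (1 + 2 * a) * exp (- a / 2)) * P \<le> (2 * K + 2) * ((1 + a) * E) * P"
        using \<open>0 \<le> P\<close> by (rule mult_right_mono)
      then show ?thesis
        by (simp add: algebra_simps)
    qed
    ultimately show "\<bar>mass a - moment a\<bar> \<le> 2 * \<epsilon> * mass a + (C0 + 2 * K * P + 2 * P) * ((1 + a) * exp (- (d / 2) * a))"
      using abs_mass_sub_moment_le_explicit[OF \<open>0 \<le> a\<close> d(1) d(3) K] E(3)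
      by (simp add: P_def[symmetric] E_def[symmetric] algebra_simps)
  qed
qed

lemma moment_div_mass_tendsto_one: "((\<lambda>a. moment a / mass a) \<longlongrightarrow> 1) at_top"
proof (rule tendstoI)
  fix \<epsilon> :: real assume "0 < \<epsilon>"
  define e where "e = \<epsilon> / 4"
  have "0 < e"
    using \<open>0 < \<epsilon>\<close> by (simp add: e_def)
  obtain d C where "0 < d" "0 \<le> C" and bound:
    "\<And>a. 0 \<le> a \<Longrightarrow> \<bar>mass a - moment a\<bar> \<le> 2 * e * mass a + C * ((1 + a) * exp (- d * a))"
    using abs_mass_sub_moment_le[OF \<open>0 < e\<close>] by blast
  define R where "R a = C * ((1 + a) * exp (- d * a))" for a
  have "((\<lambda>a. (1 + a) * exp (- d * a) / mass_lower_bound a) \<longlongrightarrow> 0) at_top"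
    unfolding mass_lower_bound_def using c_pos b_pos \<open>0 < d\<close> by real_asymp
  from tendsto_mult_right_zero[OF this, of C]
  have "((\<lambda>a. R a / mass_lower_bound a) \<longlongrightarrow> 0) at_top"
    by (simp add: R_def)
  then have "\<forall>\<^sub>F a in at_top. R a / mass_lower_bound a < e"
    using \<open>0 < e\<close> by (rule order_tendstoD)
  then show "\<forall>\<^sub>F a in at_top. dist (moment a / mass a) 1 < \<epsilon>"
    using eventually_ge_at_top[of 2]
  proof eventually_elim
    case (elim a)
    then have "0 \<le> a" "0 < mass_lower_bound a" "mass_lower_bound a \<le> mass a"
      using mass_lower_bound_pos mass_ge by auto
    then have "0 < mass a"
      by linarith
    have "R a / mass a \<le> R a / mass_lower_bound a"
      using \<open>0 \<le> C\<close> \<open>0 \<le> a\<close> \<open>0 < mass_lower_bound a\<close> \<open>mass_lower_bound a \<le> mass a\<close>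
      by (intro divide_left_mono) (auto simp: R_def)
    have "moment a / mass a - 1 = - ((mass a - moment a) / mass a)"
      using \<open>0 < mass a\<close> by (simp add: field_simps)
    then have "\<bar>moment a / mass a - 1\<bar> = \<bar>mass a - moment a\<bar> / mass a"
      using \<open>0 < mass a\<close> by (simp add: abs_divide)
    also have "\<dots> \<le> (2 * e * mass a + R a) / mass a"
      using \<open>0 < mass a\<close> bound[OF \<open>0 \<le> a\<close>] by (intro divide_right_mono) (auto simp: R_def)
    also have "\<dots> = 2 * e + R a / mass a"
      using \<open>0 < mass a\<close> by (simp add: field_simps)
    finally have "\<bar>moment a / mass a - 1\<bar> < 3 * e"
      using \<open>R a / mass a \<le> R a / mass_lower_bound a\<close> elim(1) by linarith
    then show ?case
      using \<open>0 < e\<close> by (simp add: dist_real_def e_def)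
  qed
qed

lemma moment_eq: "moment a = 2 * a * (LINT g:{0<..}|lborel. marginal_precision g * weighted_density a g)"
  unfolding moment_def by (simp only: mult.assoc set_integral_mult_right)

definition marginal :: "real \<Rightarrow> real" where
  "marginal y = mass (y\<^sup>2 / 2) / sqrt (2 * pi)"

definition marginal_deriv :: "real \<Rightarrow> real" where
  "marginal_deriv y
    = - y * (LINT g:{0<..}|lborel. marginal_precision g * weighted_density (y\<^sup>2 / 2) g) / sqrt (2 * pi)"

lemma marginal_density_eq_marginal: "marginal_density (scale_mixture_prior density) = marginal"
  using marginal_density_scale_mixture[OF density_integrable] density_pos
  by (simp add: fun_eq_iff marginal_def mass_def weighted_density_def less_imp_le)

lemma marginal_even: "marginal (- y) = marginal y"
  by (simp add: marginal_def)

lemma eventually_marginal_pos: "\<forall>\<^sub>F y in at_infinity. 0 < marginal y"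
proof (rule eventually_at_infinityI)
  fix y :: real assume "2 \<le> norm y"
  then have "2 \<le> y\<^sup>2 / 2"
    using abs_le_square_iff[of 2 y] by simp
  then show "0 < marginal y"
    using mass_pos by (simp add: marginal_def)
qed

lemma has_real_derivative_marginal: "(marginal has_real_derivative marginal_deriv y) (at y)"
proof -
  have "((\<lambda>y. LINT g:{0<..}|lborel. weighted_density (y\<^sup>2 / 2) g) has_real_derivative
      (LINT g:{0<..}|lborel. - y * (marginal_precision g * weighted_density (y\<^sup>2 / 2) g))) (at y)"
  proof (rule has_real_derivative_set_integral[where w = density])
    show "set_integrable lborel {0<..} (weighted_density (x\<^sup>2 / 2))" for x
      by (intro set_integrable_weighted_density) auto
    show "((\<lambda>x. weighted_density (x\<^sup>2 / 2) g) has_real_derivative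
        - x * (marginal_precision g * weighted_density (x\<^sup>2 / 2) g)) (at x)" for x g
      unfolding weighted_density_def gauss_kernel_def
      by (auto intro!: derivative_eq_intros simp: power2_eq_square field_simps)
    show "set_borel_measurable lborel {0<..}
        (\<lambda>g. - x * (marginal_precision g * weighted_density (x\<^sup>2 / 2) g))" for x
      unfolding set_borel_measurable_def marginal_precision_def by measurable
    show "\<bar>- x * (marginal_precision g * weighted_density (x\<^sup>2 / 2) g)\<bar> \<le> density g"
      if "g \<in> {0<..}" for x g
    proof -
      have "\<bar>- x * (marginal_precision g * weighted_density (x\<^sup>2 / 2) g)\<bar>
          = \<bar>x * marginal_precision g * gauss_kernel (x\<^sup>2 / 2) g\<bar> * density g"
        using that density_pos[of g] by (simp add: weighted_density_def abs_mult mult_ac)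
      also have "\<dots> \<le> density g"
        using abs_mult_gauss_kernel_le_one[of g x] density_pos[of g] that
        by (intro mult_left_le_one_le) auto
      finally show ?thesis .
    qed
  qed (rule density_integrable)
  then show ?thesis
    unfolding marginal_def[abs_def] marginal_deriv_def mass_def
    by (intro DERIV_cdivide) (simp only: set_integral_mult_right)
qed

lemma marginal_elasticity_tendsto: "((\<lambda>y. y * marginal_deriv y / marginal y) \<longlongrightarrow> -1) at_infinity"
proof -
  have "filterlim (\<lambda>y::real. y\<^sup>2 / 2) at_top at_infinity"
    unfolding at_infinity_eq_at_top_bot by (intro filterlim_sup) real_asymp+
  from tendsto_minus[OF filterlim_compose[OF moment_div_mass_tendsto_one this]]
  show ?thesis
    by (simp add: marginal_def marginal_deriv_def moment_eq power2_eq_square mult.assoc)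
qed

end

lemma hths_priors_log_cauchy:
  assumes "p = hths_gamma_density \<or> p = hths_plus_gamma_density"
  obtains c b where "log_cauchy_prior c b" "p = log_cauchy_prior.density c b"
proof (cases "p = hths_gamma_density")
  case True
  have prior: "log_cauchy_prior 1 pi"
    by unfold_locales auto
  moreover have "p = log_cauchy_prior.density 1 pi"
    using True by (simp add: fun_eq_iff hths_gamma_density_def log_cauchy_prior.density_def[OF prior])
  ultimately show thesis
    by (rule that)
next
  case False
  with assms have "p = hths_plus_gamma_density"
    by simp
  moreover have prior: "log_cauchy_prior 2 (2 * pi)"
    by unfold_locales auto
  ultimately have "p = log_cauchy_prior.density 2 (2 * pi)"
    by (simp add: fun_eq_iff hths_plus_gamma_density_def log_cauchy_prior.density_def[OF prior] power_mult_distrib)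
  with prior show thesis
    by (rule that)
qed

theorem theorem1:
  fixes p :: "real \<Rightarrow> real"
  assumes "p = hths_gamma_density \<or> p = hths_plus_gamma_density"
  defines "m \<equiv> marginal_density (scale_mixture_prior p)"
  shows "\<exists>L :: real \<Rightarrow> real.
           slowly_varying L \<and>
           (\<forall>\<^sub>F x in at_top. L differentiable at x) \<and>
           m \<sim>[at_infinity] (\<lambda>y. L (y\<^sup>2) / \<bar>y\<bar>) \<and>
           (\<forall>\<^sub>F y in at_infinity.
              deriv (\<lambda>t. ln (m t)) y = - 1 / y + deriv (\<lambda>t. ln (L (t\<^sup>2))) y) \<and>
           (\<lambda>y. deriv (\<lambda>t. ln (L (t\<^sup>2))) y) \<in> o[at_infinity](\<lambda>y. 1 / \<bar>y\<bar>) \<and>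
           (\<lambda>y. \<bar>deriv (\<lambda>t. ln (m t)) y\<bar>) \<sim>[at_infinity] (\<lambda>y. 1 / \<bar>y\<bar>)"
proof -
  obtain c b where prior: "log_cauchy_prior c b" and p: "p = log_cauchy_prior.density c b"
    using hths_priors_log_cauchy[OF assms(1)] by blast
  interpret log_cauchy_prior c b
    by (rule prior)
  have "m = marginal"
    by (simp add: m_def p marginal_density_eq_marginal)
  with slowly_varying_factor_if_elasticity_tendsto_minus_one[OF marginal_even eventually_marginal_pos
      has_real_derivative_marginal marginal_elasticity_tendsto]
  show ?thesis
    by simp
qed

end
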